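(* Fix $\alpha>0$, $\gamma\in(0,1)$, a constant $\bar\rho_i>0$, a finite nonempty multiset $D_{\rho_i}$ of samples $x=(s,a_i,\mathbf{a}_{-i},s')$ with $s,s'\in S$, and a distribution $p_0$ on $S$. For $\nu_i:S\to\mathbb{R}$ let $$\hat e_{\nu_i}(x)=r(s,a_i,\mathbf{a}_{-i})-\alpha\log\frac{\boldsymbol{\pi}_{-i}(\mathbf{a}_{-i}\mid s)}{\boldsymbol{\pi}^D_{-i}(\mathbf{a}_{-i}\mid s,a_i)}+\gamma\nu_i(s')-\nu_i(s),$$ $$L(\nu_i):=\bar\rho_i\,\alpha\,\hat{\mathbf{E}}_{x\in D_{\rho_i}}\Big[\exp\Big(\tfrac1\alpha\hat e_{\nu_i}(x)-1\Big)\Big]+(1-\gamma)\mathbb{E}_{s_0\sim p_0}[\nu_i(s_0)],$$ $$\tilde{\mathcal{L}}(\nu_i):=\alpha\log\Big(\bar\rho_i\,\hat{\mathbf{E}}_{x\in D_{\rho_i}}\Big[\exp\Big(\tfrac1\alpha\hat e_{\nu_i}(x)\Big)\Big]\Big)+(1-\gamma)\mathbb{E}_{s_0\sim p_0}[\nu_i(s_0)].$$ Then any minimizer $\nu_i^*$ of $L$ (over all functions $S\to\mathbb{R}$) is also a minimizer of $\tilde{\mathcal{L}}$.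
   Context: $\hat{\mathbf{E}}_{x\in D}[f(x)]:=\frac{1}{|D|}\sum_{x\in D}f(x)$ is the empirical average over a finite multiset $D$. $r$ is a real-valued reward; $\boldsymbol{\pi}_{-i}(\mathbf{a}_{-i}\mid s)$ and $\boldsymbol{\pi}^D_{-i}(\mathbf{a}_{-i}\mid s,a_i)$ are fixed conditional probability distributions, positive on the samples of $D_{\rho_i}$. *)

theory Defs
  imports "HOL-Probability.Probability" "HOL-Library.Multiset"
begin

definition emp_avg :: "'x multiset \<Rightarrow> ('x \<Rightarrow> real) \<Rightarrow> real" where
  "emp_avg D f = (\<Sum>x\<in>#D. f x) / real (size D)"

text \<open>Sample x = (s, a_i, a_{-i}, s').  piM a s = pi_{-i}(a | s), piD a s ai = piM^D_{-i}(a | s, a_i).\<close>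
definition ehat ::
  "real \<Rightarrow> real \<Rightarrow> ('s \<Rightarrow> 'a \<Rightarrow> 'b \<Rightarrow> real) \<Rightarrow> ('b \<Rightarrow> 's \<Rightarrow> real)
   \<Rightarrow> ('b \<Rightarrow> 's \<Rightarrow> 'a \<Rightarrow> real) \<Rightarrow> ('s \<Rightarrow> real) \<Rightarrow> ('s \<times> 'a \<times> 'b \<times> 's) \<Rightarrow> real" where
  "ehat \<alpha> \<gamma> r piM piD \<nu> x = (case x of (s, ai, am, s') \<Rightarrow>
     r s ai am - \<alpha> * ln (piM am s / piD am s ai) + \<gamma> * \<nu> s' - \<nu> s)"

definition L_obj ::
  "real \<Rightarrow> real \<Rightarrow> real \<Rightarrow> ('s \<times> 'a \<times> 'b \<times> 's) multiset \<Rightarrow> 's pmf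
   \<Rightarrow> ('s \<Rightarrow> 'a \<Rightarrow> 'b \<Rightarrow> real) \<Rightarrow> ('b \<Rightarrow> 's \<Rightarrow> real)
   \<Rightarrow> ('b \<Rightarrow> 's \<Rightarrow> 'a \<Rightarrow> real) \<Rightarrow> ('s \<Rightarrow> real) \<Rightarrow> real" where
  "L_obj \<alpha> \<gamma> \<rho> D p0 r piM piD \<nu> =
     \<rho> * \<alpha> * emp_avg D (\<lambda>x. exp (ehat \<alpha> \<gamma> r piM piD \<nu> x / \<alpha> - 1))
     + (1 - \<gamma>) * measure_pmf.expectation p0 \<nu>"

definition Lt_obj ::
  "real \<Rightarrow> real \<Rightarrow> real \<Rightarrow> ('s \<times> 'a \<times> 'b \<times> 's) multiset \<Rightarrow> 's pmf
   \<Rightarrow> ('s \<Rightarrow> 'a \<Rightarrow> 'b \<Rightarrow> real) \<Rightarrow> ('b \<Rightarrow> 's \<Rightarrow> real)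
   \<Rightarrow> ('b \<Rightarrow> 's \<Rightarrow> 'a \<Rightarrow> real) \<Rightarrow> ('s \<Rightarrow> real) \<Rightarrow> real" where
  "Lt_obj \<alpha> \<gamma> \<rho> D p0 r piM piD \<nu> =
     \<alpha> * ln (\<rho> * emp_avg D (\<lambda>x. exp (ehat \<alpha> \<gamma> r piM piD \<nu> x / \<alpha>)))
     + (1 - \<gamma>) * measure_pmf.expectation p0 \<nu>"

end

theory Submission
  imports Defs
begin

text \<open>Writing \<open>A \<nu>\<close> for the empirical average of \<open>exp (ehat \<nu> x / \<alpha>)\<close>, the two objectives
  share the term \<open>(1 - \<gamma>) E \<nu>\<close> and differ in \<open>\<rho> \<alpha> A \<nu> / e\<close> versus \<open>\<alpha> ln (\<rho> A \<nu>)\<close>.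
  Since \<open>ln y \<le> y / e\<close>, the objective \<open>Lt_obj\<close> is bounded by \<open>L_obj\<close> everywhere.
  Conversely, adding a constant \<open>c\<close> to \<open>\<nu>\<close> multiplies \<open>A \<nu>\<close> by \<open>exp (-(1 - \<gamma>) c / \<alpha>)\<close>,
  and minimising \<open>L_obj (\<nu> + c)\<close> over \<open>c\<close> gives exactly \<open>Lt_obj \<nu>\<close>. Hence
  \<open>Lt_obj \<nu>\<^sup>* \<le> L_obj \<nu>\<^sup>* \<le> L_obj (\<nu> + c) = Lt_obj \<nu>\<close>.\<close>

lemma sum_mset_pos:
  fixes f :: "'x \<Rightarrow> 'b :: ordered_comm_monoid_add"
  assumes "M \<noteq> {#}" and "\<And>x. x \<in># M \<Longrightarrow> 0 < f x"
  shows "0 < (\<Sum>x\<in>#M. f x)"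
  using assms
proof (induction M)
  case (add x M)
  then show ?case
    by (cases "M = {#}") (auto intro: add_pos_pos)
qed simp

lemma emp_avg_pos:
  assumes "D \<noteq> {#}" and "\<And>x. x \<in># D \<Longrightarrow> 0 < f x"
  shows "0 < emp_avg D f"
  using sum_mset_pos[OF assms] assms(1) by (simp add: emp_avg_def nonempty_has_size)

lemma emp_avg_mult_right: "emp_avg D (\<lambda>x. f x * k) = emp_avg D f * k"
  by (simp add: emp_avg_def sum_mset_distrib_right)

lemma ln_le_div_exp1:
  fixes y :: real
  assumes "0 < y"
  shows "ln y \<le> y / exp 1"
  using ln_le_minus_one[of "y / exp 1"] assms by (simp add: ln_div)

lemma ehat_add_const:
  "ehat \<alpha> \<gamma> r piM piD (\<lambda>s. \<nu> s + c) x = ehat \<alpha> \<gamma> r piM piD \<nu> x - (1 - \<gamma>) * c"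
  by (cases x) (simp add: ehat_def algebra_simps)

lemma L_obj_eq:
  "L_obj \<alpha> \<gamma> \<rho> D p0 r piM piD \<nu> =
     \<rho> * \<alpha> / exp 1 * emp_avg D (\<lambda>x. exp (ehat \<alpha> \<gamma> r piM piD \<nu> x / \<alpha>))
     + (1 - \<gamma>) * measure_pmf.expectation p0 \<nu>"
proof -
  have "emp_avg D (\<lambda>x. exp (ehat \<alpha> \<gamma> r piM piD \<nu> x / \<alpha> - 1))
      = emp_avg D (\<lambda>x. exp (ehat \<alpha> \<gamma> r piM piD \<nu> x / \<alpha>)) * inverse (exp 1)"
    by (simp add: exp_diff divide_inverse emp_avg_mult_right)
  then show ?thesis
    by (simp add: L_obj_def field_simps)
qed

lemma Lt_obj_le_L_obj:
  assumes "0 < \<alpha>" and "0 < \<rho>" and "D \<noteq> {#}"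
  shows "Lt_obj \<alpha> \<gamma> \<rho> D p0 r piM piD \<nu> \<le> L_obj \<alpha> \<gamma> \<rho> D p0 r piM piD \<nu>"
proof -
  define A where "A = emp_avg D (\<lambda>x. exp (ehat \<alpha> \<gamma> r piM piD \<nu> x / \<alpha>))"
  have "0 < \<rho> * A"
    using assms(2,3) by (simp add: A_def emp_avg_pos)
  then have "\<alpha> * ln (\<rho> * A) \<le> \<alpha> * (\<rho> * A / exp 1)"
    using assms(1) ln_le_div_exp1 by (intro mult_left_mono) auto
  then show ?thesis
    by (simp add: Lt_obj_def L_obj_eq A_def mult_ac)
qed

lemma L_obj_add_const:
  assumes "integrable (measure_pmf p0) \<nu>"
  shows "L_obj \<alpha> \<gamma> \<rho> D p0 r piM piD (\<lambda>s. \<nu> s + c) =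
     \<rho> * \<alpha> / exp 1 * emp_avg D (\<lambda>x. exp (ehat \<alpha> \<gamma> r piM piD \<nu> x / \<alpha>))
       * exp (- ((1 - \<gamma>) * c / \<alpha>))
     + (1 - \<gamma>) * (measure_pmf.expectation p0 \<nu> + c)"
proof -
  have "(\<lambda>x. exp (ehat \<alpha> \<gamma> r piM piD (\<lambda>s. \<nu> s + c) x / \<alpha>))
      = (\<lambda>x. exp (ehat \<alpha> \<gamma> r piM piD \<nu> x / \<alpha>) * exp (- ((1 - \<gamma>) * c / \<alpha>)))"
    by (simp add: ehat_add_const diff_divide_distrib mult_exp_exp)
  moreover have "measure_pmf.expectation p0 (\<lambda>s. \<nu> s + c) = measure_pmf.expectation p0 \<nu> + c"
    using assms by simp
  ultimately show ?thesis
    by (simp add: L_obj_eq emp_avg_mult_right mult.assoc)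
qed

lemma L_obj_add_const_eq_Lt_obj:
  assumes "0 < \<alpha>" and "\<gamma> < 1" and "0 < \<rho>" and "D \<noteq> {#}"
    and "integrable (measure_pmf p0) \<nu>"
  shows "\<exists>c. L_obj \<alpha> \<gamma> \<rho> D p0 r piM piD (\<lambda>s. \<nu> s + c) = Lt_obj \<alpha> \<gamma> \<rho> D p0 r piM piD \<nu>"
proof
  define A where "A = emp_avg D (\<lambda>x. exp (ehat \<alpha> \<gamma> r piM piD \<nu> x / \<alpha>))"
  define E where "E = measure_pmf.expectation p0 \<nu>"
  define c where "c = \<alpha> * (ln (\<rho> * A) - 1) / (1 - \<gamma>)"
    \<comment> \<open>the stationary point of the convex function \<open>c \<mapsto> L_obj (\<nu> + c)\<close>\<close>
  have "0 < A"
    using assms(4) by (simp add: A_def emp_avg_pos)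
  then have pos: "0 < \<rho> * A"
    using assms(3) by simp
  have shift: "(1 - \<gamma>) * c = \<alpha> * (ln (\<rho> * A) - 1)"
    using assms(2) by (simp add: c_def)
  then have "- ((1 - \<gamma>) * c / \<alpha>) = 1 - ln (\<rho> * A)"
    using assms(1) by (simp add: field_simps)
  then have factor: "exp (- ((1 - \<gamma>) * c / \<alpha>)) = exp 1 / (\<rho> * A)"
    using pos by (simp add: exp_diff)
  have "L_obj \<alpha> \<gamma> \<rho> D p0 r piM piD (\<lambda>s. \<nu> s + c)
      = \<rho> * \<alpha> / exp 1 * A * (exp 1 / (\<rho> * A)) + (1 - \<gamma>) * E + (1 - \<gamma>) * c"
    using assms(5) by (simp add: L_obj_add_const factor A_def E_def distrib_left)
  also have "\<dots> = \<alpha> * ln (\<rho> * A) + (1 - \<gamma>) * E"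
  proof -
    have cancel: "\<rho> * \<alpha> / exp 1 * A * (exp 1 / (\<rho> * A)) = \<alpha>"
      using \<open>0 < A\<close> assms(3) by (simp add: field_simps)
    show ?thesis
      unfolding cancel shift by (simp add: algebra_simps)
  qed
  also have "\<dots> = Lt_obj \<alpha> \<gamma> \<rho> D p0 r piM piD \<nu>"
    by (simp add: Lt_obj_def A_def E_def)
  finally show "L_obj \<alpha> \<gamma> \<rho> D p0 r piM piD (\<lambda>s. \<nu> s + c) = Lt_obj \<alpha> \<gamma> \<rho> D p0 r piM piD \<nu>" .
qed

theorem lemma5:
  fixes \<alpha> \<gamma> \<rho> :: real
    and D :: "('s \<times> 'a \<times> 'b \<times> 's) multiset"
    and p0 :: "'s pmf"
    and r :: "'s \<Rightarrow> 'a \<Rightarrow> 'b \<Rightarrow> real"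
    and piM :: "'b \<Rightarrow> 's \<Rightarrow> real"
    and piD :: "'b \<Rightarrow> 's \<Rightarrow> 'a \<Rightarrow> real"
    and \<nu>star :: "'s \<Rightarrow> real"
  assumes "\<alpha> > 0" and "0 < \<gamma>" and "\<gamma> < 1" and "\<rho> > 0"
    and "D \<noteq> {#}"
    and "\<forall>(s, ai, am, s') \<in> set_mset D. piM am s > 0 \<and> piD am s ai > 0"
    and "integrable (measure_pmf p0) \<nu>star"
    and "\<forall>\<nu>. integrable (measure_pmf p0) \<nu> \<longrightarrow>
           L_obj \<alpha> \<gamma> \<rho> D p0 r piM piD \<nu>star \<le> L_obj \<alpha> \<gamma> \<rho> D p0 r piM piD \<nu>"
  shows "\<forall>\<nu>. integrable (measure_pmf p0) \<nu> \<longrightarrow>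
           Lt_obj \<alpha> \<gamma> \<rho> D p0 r piM piD \<nu>star \<le> Lt_obj \<alpha> \<gamma> \<rho> D p0 r piM piD \<nu>"
proof (intro allI impI)
  fix \<nu> :: "'s \<Rightarrow> real"
  assume "integrable (measure_pmf p0) \<nu>"
  then obtain c where c: "L_obj \<alpha> \<gamma> \<rho> D p0 r piM piD (\<lambda>s. \<nu> s + c) = Lt_obj \<alpha> \<gamma> \<rho> D p0 r piM piD \<nu>"
    using L_obj_add_const_eq_Lt_obj assms(1,3,4,5) by blast
  have "integrable (measure_pmf p0) (\<lambda>s. \<nu> s + c)"
    using \<open>integrable (measure_pmf p0) \<nu>\<close> by simp
  have "Lt_obj \<alpha> \<gamma> \<rho> D p0 r piM piD \<nu>star \<le> L_obj \<alpha> \<gamma> \<rho> D p0 r piM piD \<nu>star"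
    using assms(1,4,5) by (rule Lt_obj_le_L_obj)
  also have "\<dots> \<le> L_obj \<alpha> \<gamma> \<rho> D p0 r piM piD (\<lambda>s. \<nu> s + c)"
    using assms(8) \<open>integrable (measure_pmf p0) (\<lambda>s. \<nu> s + c)\<close> by blast
  finally show "Lt_obj \<alpha> \<gamma> \<rho> D p0 r piM piD \<nu>star \<le> Lt_obj \<alpha> \<gamma> \<rho> D p0 r piM piD \<nu>"
    unfolding c .
qed

end
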